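(* Let $\theta:\mathbb{R}\to(0,\infty)$ be a periodic function and $\alpha>0$. Then the following statements are equivalent. (i) $\theta(y+\delta)\le e^{\alpha\delta}\theta(y)$ for all $y>0$ and $\delta>0$. (ii) $\theta(y+\delta)\le e^{\alpha\delta}\theta(y)$ for all $y\in\mathbb{R}$ and $\delta\ge0$. (iii) $\theta(y-\delta)\ge e^{-\alpha\delta}\theta(y)$ for all $y\in\mathbb{R}$ and $\delta\ge0$. (iv) The mapping $t\mapsto t^{-\alpha}\theta(\log t)$ is non-increasing for $t>0$. If $\theta$ is additionally differentiable, then each of (i)–(iv) is equivalent to (v) $\theta'(y)\le\alpha\,\theta(y)$ for all $y\in\mathbb{R}$. *)

theory Defs
  imports "HOL-Analysis.Analysis"
begin

definition periodic_fun :: "(real \<Rightarrow> real) \<Rightarrow> bool" where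
  "periodic_fun f \<longleftrightarrow> (\<exists>p>0. \<forall>y. f (y + p) = f y)"

end

theory Submission
  imports Defs
begin

text \<open>All four conditions say that \<open>y \<mapsto> e\<^bsup>-\<alpha>y\<^esup> \<theta>(y)\<close> is non-increasing on \<open>\<real>\<close>:
(ii) and (iii) after multiplying by a positive exponential, (iv) after the substitution
\<open>t = e\<^sup>y\<close>, and (i) because periodicity moves every \<open>y\<close> to the positive half-line.
For differentiable \<open>\<theta>\<close> the derivative of \<open>e\<^bsup>-\<alpha>y\<^esup> \<theta>(y)\<close> is
\<open>e\<^bsup>-\<alpha>y\<^esup> (\<theta>'(y) - \<alpha> \<theta>(y))\<close>, whose sign gives (v).\<close>

lemma exp_weighted_le_iff_growth_bound:
  fixes f :: "real \<Rightarrow> real" and a u v :: real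
  shows "exp (- a * v) * f v \<le> exp (- a * u) * f u \<longleftrightarrow> f v \<le> exp (a * (v - u)) * f u"
proof -
  have "exp (- a * v) * (exp (a * (v - u)) * f u) = exp (- a * u) * f u"
    by (simp add: mult.assoc[symmetric] exp_add[symmetric] algebra_simps)
  then show ?thesis
    by (metis exp_gt_zero mult_le_cancel_left_pos)
qed

lemma exp_weighted_le_iff_decay_bound:
  fixes f :: "real \<Rightarrow> real" and a u v :: real
  shows "exp (- a * v) * f v \<le> exp (- a * u) * f u \<longleftrightarrow> exp (- a * (v - u)) * f v \<le> f u"
proof -
  have "exp (- a * u) * (exp (- a * (v - u)) * f v) = exp (- a * v) * f v"
    by (simp add: mult.assoc[symmetric] exp_add[symmetric] algebra_simps)
  then show ?thesis
    by (metis exp_gt_zero mult_le_cancel_left_pos)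
qed

lemma growth_bound_iff_antimono_exp_weighted:
  fixes f :: "real \<Rightarrow> real" and a :: real
  shows "(\<forall>y. \<forall>\<delta>\<ge>0. f (y + \<delta>) \<le> exp (a * \<delta>) * f y) \<longleftrightarrow>
         antimono (\<lambda>y. exp (- a * y) * f y)"
  unfolding antimono_def exp_weighted_le_iff_growth_bound
proof (intro iffI allI impI)
  fix u v :: real
  assume bound: "\<forall>y. \<forall>\<delta>\<ge>0. f (y + \<delta>) \<le> exp (a * \<delta>) * f y" and "u \<le> v"
  show "f v \<le> exp (a * (v - u)) * f u"
    using bound[rule_format, where y = u and \<delta> = "v - u"] \<open>u \<le> v\<close> by simp
next
  fix y \<delta> :: real
  assume bound: "\<forall>u v. u \<le> v \<longrightarrow> f v \<le> exp (a * (v - u)) * f u" and "\<delta> \<ge> 0"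
  show "f (y + \<delta>) \<le> exp (a * \<delta>) * f y"
    using bound[rule_format, where u = y and v = "y + \<delta>"] \<open>\<delta> \<ge> 0\<close> by simp
qed

lemma decay_bound_iff_antimono_exp_weighted:
  fixes f :: "real \<Rightarrow> real" and a :: real
  shows "(\<forall>y. \<forall>\<delta>\<ge>0. f (y - \<delta>) \<ge> exp (- a * \<delta>) * f y) \<longleftrightarrow>
         antimono (\<lambda>y. exp (- a * y) * f y)"
  unfolding antimono_def exp_weighted_le_iff_decay_bound
proof (intro iffI allI impI)
  fix u v :: real
  assume bound: "\<forall>y. \<forall>\<delta>\<ge>0. f (y - \<delta>) \<ge> exp (- a * \<delta>) * f y" and "u \<le> v"
  show "exp (- a * (v - u)) * f v \<le> f u"
    using bound[rule_format, where y = v and \<delta> = "v - u"] \<open>u \<le> v\<close> by simp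
next
  fix y \<delta> :: real
  assume bound: "\<forall>u v. u \<le> v \<longrightarrow> exp (- a * (v - u)) * f v \<le> f u" and "\<delta> \<ge> 0"
  show "f (y - \<delta>) \<ge> exp (- a * \<delta>) * f y"
    using bound[rule_format, where u = "y - \<delta>" and v = y] \<open>\<delta> \<ge> 0\<close> by simp
qed

lemma antimono_on_pos_comp_ln_iff:
  fixes f :: "real \<Rightarrow> 'a :: order"
  shows "antimono_on {0<..} (\<lambda>t. f (ln t)) \<longleftrightarrow> antimono f"
proof
  assume anti: "antimono_on {0<..} (\<lambda>t. f (ln t))"
  show "antimono f"
  proof (rule antimonoI)
    fix x y :: real
    assume "x \<le> y"
    then show "f y \<le> f x"
      using monotone_onD[OF anti, of "exp x" "exp y"] by simp
  qed
next
  assume anti: "antimono f"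
  show "antimono_on {0<..} (\<lambda>t. f (ln t))"
  proof (rule monotone_onI)
    fix s t :: real
    assume "s \<in> {0<..}" "t \<in> {0<..}" "s \<le> t"
    then have "ln s \<le> ln t"
      by simp
    then show "f (ln t) \<le> f (ln s)"
      by (rule antimonoD[OF anti])
  qed
qed

lemma periodic_fun_large_period:
  assumes "periodic_fun f"
  obtains T where "T > c" and "\<And>x. f (x + T) = f x"
proof -
  obtain p where "p > 0" and period: "\<And>x. f (x + p) = f x"
    using assms unfolding periodic_fun_def by blast
  then interpret periodic_fun_simple f p
    by unfold_locales
  obtain n where "c < of_nat n * p"
    using ex_less_of_nat_mult[OF \<open>p > 0\<close>] by blast
  then show thesis
    using plus_of_nat by (rule that)
qed

lemma periodic_growth_bound_from_pos:
  fixes f :: "real \<Rightarrow> real" and a :: real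
  assumes "periodic_fun f"
    and bound: "\<forall>y>0. \<forall>\<delta>>0. f (y + \<delta>) \<le> exp (a * \<delta>) * f y"
  shows "\<forall>y. \<forall>\<delta>\<ge>0. f (y + \<delta>) \<le> exp (a * \<delta>) * f y"
proof (intro allI impI)
  fix y \<delta> :: real
  assume "\<delta> \<ge> 0"
  obtain T where "T > - y" and period: "\<And>x. f (x + T) = f x"
    using periodic_fun_large_period[OF assms(1), where c = "- y"] by blast
  show "f (y + \<delta>) \<le> exp (a * \<delta>) * f y"
  proof (cases "\<delta> = 0")
    case False
    then have "f ((y + T) + \<delta>) \<le> exp (a * \<delta>) * f (y + T)"
      using bound \<open>T > - y\<close> \<open>\<delta> \<ge> 0\<close> by simp
    moreover have "(y + T) + \<delta> = (y + \<delta>) + T"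
      by simp
    ultimately show ?thesis
      by (simp only: period)
  qed simp
qed

lemma antimono_iff_derivative_nonpos:
  fixes g g' :: "real \<Rightarrow> real"
  assumes deriv: "\<And>x. (g has_real_derivative g' x) (at x)"
  shows "antimono g \<longleftrightarrow> (\<forall>x. g' x \<le> 0)"
proof
  assume anti: "antimono g"
  have mono: "mono (\<lambda>x. - g x)"
    by (rule monoI) (simp add: antimonoD[OF anti])
  show "\<forall>x. g' x \<le> 0"
  proof
    fix x
    have "((\<lambda>x. - g x) has_real_derivative - g' x) (at x)"
      using deriv by (rule DERIV_minus)
    then have "- g' x \<ge> 0"
      by (rule mono_on_imp_deriv_nonneg[OF mono]) simp
    then show "g' x \<le> 0"
      by simp
  qed
next
  assume nonpos: "\<forall>x. g' x \<le> 0"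
  show "antimono g"
  proof (rule antimonoI)
    fix x y :: real
    assume "x \<le> y"
    then show "g y \<le> g x"
      by (rule deriv_nonpos_imp_antimono[of x y g g', rotated 2]) (simp_all add: deriv nonpos)
  qed
qed

lemma antimono_exp_weighted_iff_deriv_le:
  fixes f :: "real \<Rightarrow> real" and a :: real
  assumes "\<And>y. f differentiable (at y)"
  shows "antimono (\<lambda>y. exp (- a * y) * f y) \<longleftrightarrow> (\<forall>y. deriv f y \<le> a * f y)"
proof -
  have "((\<lambda>y. exp (- a * y) * f y) has_real_derivative
          exp (- a * y) * (deriv f y - a * f y)) (at y)" for y
  proof -
    have "(f has_real_derivative deriv f y) (at y)"
      using assms by (simp add: DERIV_deriv_iff_real_differentiable)
    then show ?thesis
      by (auto intro!: derivative_eq_intros simp: algebra_simps)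
  qed
  then have "antimono (\<lambda>y. exp (- a * y) * f y) \<longleftrightarrow>
             (\<forall>y. exp (- a * y) * (deriv f y - a * f y) \<le> 0)"
    by (rule antimono_iff_derivative_nonpos)
  moreover have "exp (- a * y) * (deriv f y - a * f y) \<le> 0 \<longleftrightarrow> deriv f y \<le> a * f y" for y
    by (simp add: mult_le_0_iff)
  ultimately show ?thesis
    by simp
qed

theorem lemmaA1:
  fixes \<theta> :: "real \<Rightarrow> real" and \<alpha> :: real
  assumes pos: "\<And>y. \<theta> y > 0"
    and per: "periodic_fun \<theta>"
    and alpha: "\<alpha> > 0"
  defines "P1 \<equiv> (\<forall>y>0. \<forall>\<delta>>0. \<theta> (y + \<delta>) \<le> exp (\<alpha> * \<delta>) * \<theta> y)"
    and "P2 \<equiv> (\<forall>y. \<forall>\<delta>\<ge>0. \<theta> (y + \<delta>) \<le> exp (\<alpha> * \<delta>) * \<theta> y)"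
    and "P3 \<equiv> (\<forall>y. \<forall>\<delta>\<ge>0. \<theta> (y - \<delta>) \<ge> exp (- \<alpha> * \<delta>) * \<theta> y)"
    and "P4 \<equiv> antimono_on {0<..} (\<lambda>t::real. t powr (- \<alpha>) * \<theta> (ln t))"
  shows "(P1 \<longleftrightarrow> P2) \<and> (P1 \<longleftrightarrow> P3) \<and> (P1 \<longleftrightarrow> P4) \<and>
         ((\<forall>y. \<theta> differentiable (at y)) \<longrightarrow>
            (P1 \<longleftrightarrow> (\<forall>y. deriv \<theta> y \<le> \<alpha> * \<theta> y)))"
proof -
  define g where "g y = exp (- \<alpha> * y) * \<theta> y" for y
  have P12: "P1 \<longleftrightarrow> P2"
    using periodic_growth_bound_from_pos[OF per] unfolding P1_def P2_def by auto
  have P2: "P2 \<longleftrightarrow> antimono g"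
    unfolding P2_def g_def by (rule growth_bound_iff_antimono_exp_weighted)
  have P3: "P3 \<longleftrightarrow> antimono g"
    unfolding P3_def g_def by (rule decay_bound_iff_antimono_exp_weighted)
  have "antimono_on {0<..} (\<lambda>t::real. t powr (- \<alpha>) * \<theta> (ln t)) \<longleftrightarrow>
        antimono_on {0<..} (\<lambda>t. g (ln t))"
    by (simp add: monotone_on_def g_def powr_def)
  then have P4: "P4 \<longleftrightarrow> antimono g"
    unfolding P4_def by (simp add: antimono_on_pos_comp_ln_iff)
  have "(\<forall>y. \<theta> differentiable (at y)) \<longrightarrow> (antimono g \<longleftrightarrow> (\<forall>y. deriv \<theta> y \<le> \<alpha> * \<theta> y))"
    unfolding g_def using antimono_exp_weighted_iff_deriv_le by blast
  with P12 P2 P3 P4 show ?thesis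
    by blast
qed

end
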